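(* Let $\widetilde{\mathcal A}_{\mathrm{loc}}=\widetilde{\mathcal A}\otimes_{\mathbb Z[q_1^{\pm1},q_2^{\pm1}]}\mathbb Q(q_1,q_2)$. Then $\widetilde{\mathcal A}_{\mathrm{loc}}$ is generated as a $\mathbb Q(q_1,q_2)$-algebra by the elements $\mathscr E_{(m)}$, $m\in\mathbb Z$ (the generators indexed by vectors of length one). Equivalently, the algebra homomorphism $\mathcal U\otimes\mathbb Q(q_1,q_2)\to\widetilde{\mathcal A}_{\mathrm{loc}}$, $E_m\mapsto\mathscr E_{(m)}$, is surjective.
   Context: $\widetilde{\mathcal A}$ is the $\mathbb Z[q_1^{\pm1},q_2^{\pm1}]$-algebra generated by symbols $\mathscr E_{(d_1,\dots,d_n)}$ ($n\ge1$, $d_i\in\mathbb Z$) modulo the relations: for all $d_1,\dots,d_n$ and $1\le i<n$, $\mathscr E_{(d_1,\dots,d_i,d_{i+1},\dots,d_n)}-q_1q_2\mathscr E_{(d_1,\dots,d_i-1,d_{i+1}+1,\dots,d_n)}=(1-q_1)\mathscr E_{(d_1,\dots,d_i)}\mathscr E_{(d_{i+1},\dots,d_n)}$; and for all $d_1,\dots,d_n,k$, $[\mathscr E_{(k)},\mathscr E_{(d_1,\dots,d_n)}]=(q_2-1)\sum_{i=1}^nc_i$ with $c_i=\sum_{a=1}^{k-d_i}\mathscr E_{(d_1,\dots,d_{i-1},k-a,d_i+a,d_{i+1},\dots,d_n)}$ if $k\ge d_i$ and $c_i=-\sum_{a=1}^{d_i-k}\mathscr E_{(d_1,\dots,d_{i-1},d_i-a,k+a,d_{i+1},\dots,d_n)}$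 if $k\le d_i$. $\mathcal U$ is the $\mathbb Z[q_1^{\pm1},q_2^{\pm1}]$-algebra generated by $E_m$ ($m\in\mathbb Z$), with $E(z)=\sum_mE_mz^{-m}$, modulo $E(z)E(w)(z-wq_1)(z-wq_2)(z-\tfrac{w}{q_1q_2})=E(w)E(z)(zq_1-w)(zq_2-w)(\tfrac{z}{q_1q_2}-w)$ and $[[E_{m+1},E_{m-1}],E_m]=0$; the homomorphism $E_m\mapsto\mathscr E_{(m)}$ to $\widetilde{\mathcal A}$ is well defined. *)

theory Defs
  imports "HOL-Library.Poly_Mapping" "HOL-Computational_Algebra.Polynomial"
    "HOL-Computational_Algebra.Fraction_Field"
begin

text \<open>Q(q1,q2) realised as the fraction field of Q[q1][q2]; q1 is the inner
  variable, q2 the outer one.\<close>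
type_synonym qfield = "rat poly poly fract"

definition q1 :: qfield where "q1 = Fract [:[:0, 1:]:] 1"
definition q2 :: qfield where "q2 = Fract [:0, 1:] 1"

text \<open>Generators are the symbols E_d indexed by integer vectors d (only
  nonempty d are used).  An element of the free algebra is a finitely supported
  map from words (lists of symbols) to coefficients.\<close>
type_synonym falg = "int list list \<Rightarrow>\<^sub>0 qfield"

definition fa_mult :: "falg \<Rightarrow> falg \<Rightarrow> falg" where
  "fa_mult p q = (\<Sum>u\<in>Poly_Mapping.keys p. \<Sum>v\<in>Poly_Mapping.keys q.
      Poly_Mapping.single (u @ v) (Poly_Mapping.lookup p u * Poly_Mapping.lookup q v))"

definition fa_scal :: "qfield \<Rightarrow> falg" where
  "fa_scal c = Poly_Mapping.single [] c"

definition fa_gen :: "int list \<Rightarrow> falg" where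
  "fa_gen d = Poly_Mapping.single [d] 1"

definition fa_admissible :: "falg \<Rightarrow> bool" where
  "fa_admissible p \<longleftrightarrow> (\<forall>w\<in>Poly_Mapping.keys p. \<forall>d\<in>set w. d \<noteq> [])"

text \<open>First family: for d = a0 @ [x] @ y # b0 (i.e. d_i = x, d_(i+1) = y):
  E_d - q1 q2 E_(.., x-1, y+1, ..) - (1 - q1) E_(a0@[x]) E_(y#b0).\<close>
definition rel1 :: "int list \<Rightarrow> int \<Rightarrow> int \<Rightarrow> int list \<Rightarrow> falg" where
  "rel1 a0 x y b0 =
     fa_gen (a0 @ [x] @ y # b0)
     - fa_mult (fa_scal (q1 * q2)) (fa_gen (a0 @ [x - 1] @ (y + 1) # b0))
     - fa_mult (fa_scal (1 - q1)) (fa_mult (fa_gen (a0 @ [x])) (fa_gen (y # b0)))"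

text \<open>The summand c_i (0-based index i) of the commutator relation.  For
  k >= d_i the second sum is empty and for k <= d_i the first one is empty,
  so this agrees with the case distinction of the paper.\<close>
definition rel_c :: "int \<Rightarrow> int list \<Rightarrow> nat \<Rightarrow> falg" where
  "rel_c k d i =
     (\<Sum>t\<in>{1..k - d ! i}. fa_gen (take i d @ [k - t, d ! i + t] @ drop (Suc i) d))
     - (\<Sum>t\<in>{1..d ! i - k}. fa_gen (take i d @ [d ! i - t, k + t] @ drop (Suc i) d))"

definition rel2 :: "int \<Rightarrow> int list \<Rightarrow> falg" where
  "rel2 k d =
     fa_mult (fa_gen [k]) (fa_gen d) - fa_mult (fa_gen d) (fa_gen [k])
     - fa_mult (fa_scal (q2 - 1)) (\<Sum>i<length d. rel_c k d i)"

definition rels :: "falg set" where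
  "rels = {rel1 a0 x y b0 | a0 x y b0. True} \<union> {rel2 k d | k d. d \<noteq> []}"

inductive_set fa_ideal :: "falg set \<Rightarrow> falg set" for R where
  base: "r \<in> R \<Longrightarrow> r \<in> fa_ideal R"
| zero: "0 \<in> fa_ideal R"
| add: "a \<in> fa_ideal R \<Longrightarrow> b \<in> fa_ideal R \<Longrightarrow> a + b \<in> fa_ideal R"
| mult: "a \<in> fa_ideal R \<Longrightarrow> fa_mult (fa_mult x a) y \<in> fa_ideal R"

inductive_set fa_subalg :: "int list set \<Rightarrow> falg set" for S where
  scal: "fa_scal c \<in> fa_subalg S"
| gen: "d \<in> S \<Longrightarrow> fa_gen d \<in> fa_subalg S"
| add: "a \<in> fa_subalg S \<Longrightarrow> b \<in> fa_subalg S \<Longrightarrow> a + b \<in> fa_subalg S"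
| mult: "a \<in> fa_subalg S \<Longrightarrow> b \<in> fa_subalg S \<Longrightarrow> fa_mult a b \<in> fa_subalg S"

end

theory Submission imports Defs begin

text \<open>Let \<open>M\<close> be the set of elements congruent modulo the relations to an element of the
  subalgebra generated by the \<open>E_(m)\<close>; it is a subalgebra, so it suffices that every generator
  \<open>E_d\<close> lies in \<open>M\<close>, which is shown by induction on the length \<open>n \<ge> 2\<close> of \<open>d\<close>.  Once all shorter
  generators lie in \<open>M\<close>, the first relation says \<open>E_d \<equiv> q1 q2 E_d'\<close> modulo \<open>M\<close>, where \<open>d'\<close> moves
  one unit from an entry to its right neighbour; as \<open>q1 q2\<close> is invertible, membership in \<open>M\<close> only
  depends on the sum of the entries of \<open>d\<close>, and \<open>d\<close> may be taken to be \<open>(k + r, k, \<dots>, k)\<close> with \<open>1 \<le> r \<le> n\<close>.  The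
  commutator of \<open>E_(k)\<close> with the generator \<open>(k + r, k, \<dots>, k)\<close> of length \<open>n - 1\<close> lies in \<open>M\<close>, and
  by the second relation it is \<open>1 - q2\<close> times \<open>\<Sum>\<^sub>t E_(k+r-t, k+t, k, \<dots>, k)\<close>.  Moving units
  again, this sum is congruent to \<open>(1 + q1 q2 + \<dots> + (q1 q2)^(r-1)) E_(k, k+r, k, \<dots>, k)\<close>, and
  both scalars are nonzero in \<open>\<rat>(q1, q2)\<close>.\<close>

lemma lookup_fa_mult:
  "Poly_Mapping.lookup (fa_mult p q) w =
     (\<Sum>i\<le>length w. Poly_Mapping.lookup p (take i w) * Poly_Mapping.lookup q (drop i w))"
proof -
  let ?f = "\<lambda>x. Poly_Mapping.lookup p (fst x) * Poly_Mapping.lookup q (snd x)"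
  let ?K = "Poly_Mapping.keys p \<times> Poly_Mapping.keys q"
  define T where "T = (\<lambda>i. (take i w, drop i w)) ` {..length w}"
  have T: "T = {x. fst x @ snd x = w}"
    unfolding T_def
  proof (auto, goal_cases)
    case (1 a b)
    then show ?case by (intro image_eqI[where x="length a"]) auto
  qed
  have "Poly_Mapping.lookup (fa_mult p q) w =
     (\<Sum>u\<in>Poly_Mapping.keys p. \<Sum>v\<in>Poly_Mapping.keys q.
        if u @ v = w then Poly_Mapping.lookup p u * Poly_Mapping.lookup q v else 0)"
    by (simp add: fa_mult_def lookup_sum lookup_single when_def)
  also have "\<dots> = (\<Sum>x\<in>?K. if x \<in> T then ?f x else 0)"
    by (simp add: sum.cartesian_product T case_prod_beta)
  also have "\<dots> = (\<Sum>x\<in>?K \<inter> T. ?f x)"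
    by (simp add: sum.inter_restrict[symmetric] if_distrib)
  also have "\<dots> = (\<Sum>x\<in>T. ?f x)"
    by (rule sum.mono_neutral_left) (auto simp: T_def in_keys_iff)
  also have "\<dots> = (\<Sum>i\<le>length w. ?f (take i w, drop i w))"
    unfolding T_def by (subst sum.reindex) (auto simp: inj_on_def dest!: arg_cong[where f=length])
  finally show ?thesis by simp
qed

definition fa_smult :: "qfield \<Rightarrow> falg \<Rightarrow> falg" where
  "fa_smult c p = fa_mult (fa_scal c) p"

lemma lookup_fa_smult [simp]: "Poly_Mapping.lookup (fa_smult c p) w = c * Poly_Mapping.lookup p w"
proof -
  have "Poly_Mapping.lookup (fa_smult c p) w =
      (\<Sum>i\<le>length w. if i = 0 then c * Poly_Mapping.lookup p w else 0)"
    unfolding fa_smult_def lookup_fa_mult fa_scal_def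
    by (rule sum.cong) (auto simp: lookup_single when_def)
  then show ?thesis by simp
qed

lemma lookup_fa_mult_scal [simp]:
  "Poly_Mapping.lookup (fa_mult p (fa_scal c)) w = Poly_Mapping.lookup p w * c"
proof -
  have "Poly_Mapping.lookup (fa_mult p (fa_scal c)) w =
      (\<Sum>i\<le>length w. if i = length w then Poly_Mapping.lookup p w * c else 0)"
    unfolding lookup_fa_mult fa_scal_def
    by (rule sum.cong) (auto simp: lookup_single when_def)
  then show ?thesis by simp
qed

lemma fa_mult_scal_one_right [simp]: "fa_mult p (fa_scal 1) = p"
  by (rule poly_mapping_eqI) simp

lemma fa_mult_scal_one_left [simp]: "fa_mult (fa_scal 1) p = p"
  using lookup_fa_smult[of 1 p] by (intro poly_mapping_eqI) (simp add: fa_smult_def)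

lemma fa_mult_diff_left: "fa_mult (a - b) c = fa_mult a c - fa_mult b c"
  by (rule poly_mapping_eqI) (simp add: lookup_fa_mult lookup_minus left_diff_distrib sum_subtractf)

lemma fa_mult_diff_right: "fa_mult a (b - c) = fa_mult a b - fa_mult a c"
  by (rule poly_mapping_eqI) (simp add: lookup_fa_mult lookup_minus right_diff_distrib sum_subtractf)

lemma fa_mult_single:
  "fa_mult (Poly_Mapping.single u a) (Poly_Mapping.single v b) = Poly_Mapping.single (u @ v) (a * b)"
  by (simp add: fa_mult_def)

lemma fa_smult_smult [simp]: "fa_smult a (fa_smult b p) = fa_smult (a * b) p"
  by (rule poly_mapping_eqI) simp

lemma fa_smult_one [simp]: "fa_smult 1 p = p"
  by (rule poly_mapping_eqI) simp

lemma fa_smult_minus_one: "fa_smult (-1) p = - p"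
  by (rule poly_mapping_eqI) simp

lemma fa_smult_diff: "fa_smult a (p - q) = fa_smult a p - fa_smult a q"
  by (rule poly_mapping_eqI) (simp add: lookup_minus right_diff_distrib)

lemma fa_smult_sum_left: "fa_smult (\<Sum>t\<in>A. f t) p = (\<Sum>t\<in>A. fa_smult (f t) p)"
  by (rule poly_mapping_eqI) (simp add: lookup_sum sum_distrib_right)

lemma sum_single_keys: "(\<Sum>w\<in>Poly_Mapping.keys p. Poly_Mapping.single w (Poly_Mapping.lookup p w)) = p"
  by (rule poly_mapping_eqI) (simp add: lookup_sum lookup_single when_def in_keys_iff)

lemma fa_ideal_smult: "a \<in> fa_ideal R \<Longrightarrow> fa_smult c a \<in> fa_ideal R"
  using fa_ideal.mult[of a R "fa_scal c" "fa_scal 1"] by (simp add: fa_smult_def)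

lemma fa_ideal_mult_left: "a \<in> fa_ideal R \<Longrightarrow> fa_mult x a \<in> fa_ideal R"
  using fa_ideal.mult[of a R x "fa_scal 1"] by simp

lemma fa_ideal_mult_right: "a \<in> fa_ideal R \<Longrightarrow> fa_mult a y \<in> fa_ideal R"
  using fa_ideal.mult[of a R "fa_scal 1" y] by simp

lemma fa_subalg_smult: "a \<in> fa_subalg S \<Longrightarrow> fa_smult c a \<in> fa_subalg S"
  unfolding fa_smult_def by (intro fa_subalg.mult fa_subalg.scal)

lemma fa_subalg_zero: "0 \<in> fa_subalg S"
  using fa_subalg.scal[of 0] by (simp add: fa_scal_def)

definition subalg_plus_ideal :: "int list set \<Rightarrow> falg set \<Rightarrow> falg set" where
  "subalg_plus_ideal S R = {p. \<exists>s\<in>fa_subalg S. p - s \<in> fa_ideal R}"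

context
  fixes S :: "int list set" and R :: "falg set"
begin

lemma subalg_plus_ideal_subalg: "a \<in> fa_subalg S \<Longrightarrow> a \<in> subalg_plus_ideal S R"
  unfolding subalg_plus_ideal_def using fa_ideal.zero by force

lemma subalg_plus_ideal_ideal: "a \<in> fa_ideal R \<Longrightarrow> a \<in> subalg_plus_ideal S R"
  unfolding subalg_plus_ideal_def using fa_subalg_zero by force

lemma subalg_plus_ideal_zero: "0 \<in> subalg_plus_ideal S R"
  by (rule subalg_plus_ideal_subalg[OF fa_subalg_zero])

lemma subalg_plus_ideal_add:
  assumes "a \<in> subalg_plus_ideal S R" "b \<in> subalg_plus_ideal S R"
  shows "a + b \<in> subalg_plus_ideal S R"
proof -
  obtain s t where "s \<in> fa_subalg S" "t \<in> fa_subalg S" "a - s \<in> fa_ideal R" "b - t \<in> fa_ideal R"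
    using assms unfolding subalg_plus_ideal_def by blast
  moreover have "(a + b) - (s + t) = (a - s) + (b - t)" by simp
  ultimately show ?thesis
    unfolding subalg_plus_ideal_def by (metis (mono_tags) CollectI fa_ideal.add fa_subalg.add)
qed

lemma subalg_plus_ideal_smult:
  assumes "a \<in> subalg_plus_ideal S R"
  shows "fa_smult c a \<in> subalg_plus_ideal S R"
proof -
  obtain s where "s \<in> fa_subalg S" "a - s \<in> fa_ideal R"
    using assms unfolding subalg_plus_ideal_def by blast
  then have "fa_smult c s \<in> fa_subalg S" "fa_smult c a - fa_smult c s \<in> fa_ideal R"
    using fa_subalg_smult fa_ideal_smult[of "a - s"] by (auto simp: fa_smult_diff)
  then show ?thesis unfolding subalg_plus_ideal_def by blast
qed

lemma subalg_plus_ideal_uminus: "a \<in> subalg_plus_ideal S R \<Longrightarrow> - a \<in> subalg_plus_ideal S R"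
  using subalg_plus_ideal_smult[of a "-1"] by (simp add: fa_smult_minus_one)

lemma subalg_plus_ideal_diff:
  "a \<in> subalg_plus_ideal S R \<Longrightarrow> b \<in> subalg_plus_ideal S R \<Longrightarrow> a - b \<in> subalg_plus_ideal S R"
  using subalg_plus_ideal_add[OF _ subalg_plus_ideal_uminus, of a b] by simp

lemma subalg_plus_ideal_mult:
  assumes "a \<in> subalg_plus_ideal S R" "b \<in> subalg_plus_ideal S R"
  shows "fa_mult a b \<in> subalg_plus_ideal S R"
proof -
  obtain s t where st: "s \<in> fa_subalg S" "t \<in> fa_subalg S" "a - s \<in> fa_ideal R" "b - t \<in> fa_ideal R"
    using assms unfolding subalg_plus_ideal_def by blast
  have "fa_mult a b - fa_mult s t = fa_mult (a - s) b + fa_mult s (b - t)"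
    by (simp add: fa_mult_diff_left fa_mult_diff_right)
  also have "\<dots> \<in> fa_ideal R"
    using st by (intro fa_ideal.add fa_ideal_mult_left fa_ideal_mult_right)
  finally show ?thesis
    using st fa_subalg.mult unfolding subalg_plus_ideal_def by blast
qed

lemma subalg_plus_ideal_sum:
  "(\<And>t. t \<in> A \<Longrightarrow> f t \<in> subalg_plus_ideal S R) \<Longrightarrow> (\<Sum>t\<in>A. f t) \<in> subalg_plus_ideal S R"
  by (induction A rule: infinite_finite_induct)
    (auto intro: subalg_plus_ideal_zero subalg_plus_ideal_add)

lemma subalg_plus_ideal_smult_cancel:
  assumes "fa_smult c a \<in> subalg_plus_ideal S R" "c \<noteq> 0"
  shows "a \<in> subalg_plus_ideal S R"
  using subalg_plus_ideal_smult[OF assms(1), of "inverse c"] assms(2) by simp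

end

lemma Fract_one_power: "Fract (a :: 'a :: idom) 1 ^ j = Fract (a ^ j) 1"
  by (induction j) (simp_all add: One_fract_def)

lemma Fract_one_sum: "(\<Sum>j\<in>A. Fract (f j :: 'a :: idom) 1) = Fract (\<Sum>j\<in>A. f j) 1"
  by (induction A rule: infinite_finite_induct) (simp_all add: Zero_fract_def)

lemma Fract_one_eq_0_iff: "Fract (a :: 'a :: idom) 1 = 0 \<longleftrightarrow> a = 0"
  by (simp add: Zero_fract_def eq_fract)

lemma sum_powers_neq_0_if_coeff_0:
  fixes p :: "'a :: comm_semiring_1 poly"
  assumes "coeff p 0 = 0" "r \<ge> 1"
  shows "(\<Sum>j<r. p ^ j) \<noteq> 0"
proof -
  have "coeff (\<Sum>j<r. p ^ j) 0 = 1"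
    using assms by (simp add: coeff_sum coeff_0_power power_0_left)
  then show ?thesis by auto
qed

lemma q1_times_q2: "q1 * q2 = Fract [:0, [:0, 1:]:] 1"
  by (simp add: q1_def q2_def)

lemma q1_times_q2_neq_0: "q1 * q2 \<noteq> 0"
  by (simp add: q1_times_q2 Fract_one_eq_0_iff)

lemma sum_powers_q1_times_q2_neq_0: "r \<ge> 1 \<Longrightarrow> (\<Sum>j<r. (q1 * q2) ^ j) \<noteq> 0"
  using sum_powers_neq_0_if_coeff_0[of "[:0, [:0, 1:]:]" r]
  by (simp add: q1_times_q2 Fract_one_power Fract_one_sum Fract_one_eq_0_iff)

lemma q2_minus_1_neq_0: "q2 - 1 \<noteq> 0"
proof -
  have "coeff [:0, 1:] 1 \<noteq> coeff (1 :: rat poly poly) 1" by simp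
  then have "[:0, 1:] \<noteq> (1 :: rat poly poly)" by metis
  then have "[:0, 1:] - 1 \<noteq> (0 :: rat poly poly)" by simp
  moreover have "q2 - 1 = Fract ([:0, 1:] - 1) 1" by (simp add: q2_def One_fract_def)
  ultimately show ?thesis by (metis Fract_one_eq_0_iff)
qed

abbreviation reducible :: "falg set" where
  "reducible \<equiv> subalg_plus_ideal {[m] | m. True} rels"

lemma rel1_reducible: "rel1 pre x y suf \<in> reducible"
  by (intro subalg_plus_ideal_ideal fa_ideal.base) (auto simp: rels_def)

lemma rel2_reducible: "d \<noteq> [] \<Longrightarrow> rel2 k d \<in> reducible"
  by (intro subalg_plus_ideal_ideal fa_ideal.base) (auto simp: rels_def)

lemma fa_gen_singleton_reducible: "fa_gen [m] \<in> reducible"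
  by (intro subalg_plus_ideal_subalg fa_subalg.gen) blast

context
  fixes n :: nat
  assumes shorter_gens_reducible: "\<And>d. d \<noteq> [] \<Longrightarrow> length d < n \<Longrightarrow> fa_gen d \<in> reducible"
begin

lemma fa_gen_transfer_one:
  assumes "length pre + length suf + 2 = n"
  shows "fa_gen (pre @ [x] @ y # suf) - fa_smult (q1 * q2) (fa_gen (pre @ [x - 1] @ (y + 1) # suf))
    \<in> reducible"
proof -
  have "fa_gen (pre @ [x] @ y # suf) - fa_smult (q1 * q2) (fa_gen (pre @ [x - 1] @ (y + 1) # suf))
      = rel1 pre x y suf + fa_smult (1 - q1) (fa_mult (fa_gen (pre @ [x])) (fa_gen (y # suf)))"
    unfolding rel1_def fa_smult_def by simp
  also have "\<dots> \<in> reducible"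
    using assms by (intro subalg_plus_ideal_add rel1_reducible subalg_plus_ideal_smult
        subalg_plus_ideal_mult shorter_gens_reducible) auto
  finally show ?thesis .
qed

lemma fa_gen_reducible_iff_transfer:
  assumes len: "length pre + length suf + 2 = n"
  shows "fa_gen (pre @ [x] @ y # suf) \<in> reducible \<longleftrightarrow> fa_gen (pre @ [x + j] @ (y - j) # suf) \<in> reducible"
proof -
  have unit_step: "fa_gen (pre @ [x] @ y # suf) \<in> reducible \<longleftrightarrow>
      fa_gen (pre @ [x - 1] @ (y + 1) # suf) \<in> reducible" for x y
  proof
    note transfer = fa_gen_transfer_one[OF len, of x y]
    assume "fa_gen (pre @ [x] @ y # suf) \<in> reducible"
    from subalg_plus_ideal_diff[OF this transfer]
    have "fa_smult (q1 * q2) (fa_gen (pre @ [x - 1] @ (y + 1) # suf)) \<in> reducible" by simp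
    then show "fa_gen (pre @ [x - 1] @ (y + 1) # suf) \<in> reducible"
      using subalg_plus_ideal_smult_cancel q1_times_q2_neq_0 by blast
  next
    note transfer = fa_gen_transfer_one[OF len, of x y]
    assume "fa_gen (pre @ [x - 1] @ (y + 1) # suf) \<in> reducible"
    from subalg_plus_ideal_add[OF transfer subalg_plus_ideal_smult[OF this, of "q1 * q2"]]
    show "fa_gen (pre @ [x] @ y # suf) \<in> reducible" by simp
  qed
  have nat_steps: "fa_gen (pre @ [x] @ y # suf) \<in> reducible \<longleftrightarrow>
      fa_gen (pre @ [x - int m] @ (y + int m) # suf) \<in> reducible" for m x y
  proof (induction m arbitrary: x y)
    case (Suc m)
    then show ?case using unit_step[of x y] Suc.IH[of "x - 1" "y + 1"] by (simp add: algebra_simps)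
  qed simp
  show ?thesis
  proof (cases "j \<ge> 0")
    case True
    then show ?thesis using nat_steps[of "x + j" "y - j" "nat j"] by simp
  next
    case False
    then show ?thesis using nat_steps[of x y "nat (- j)"] by simp
  qed
qed

lemma fa_gen_reducible_iff_constant_tail:
  "length pre + 1 + length t = n \<Longrightarrow> fa_gen (pre @ x # t) \<in> reducible \<longleftrightarrow>
     fa_gen (pre @ (x + sum_list t - int (length t) * k) # replicate (length t) k) \<in> reducible"
proof (induction t arbitrary: pre x)
  case (Cons y t)
  let ?y = "y + sum_list t - int (length t) * k"
  have len: "length pre + length (replicate (length t) k) + 2 = n" using Cons.prems by simp
  have "fa_gen (pre @ x # y # t) \<in> reducible \<longleftrightarrow>
      fa_gen ((pre @ [x]) @ ?y # replicate (length t) k) \<in> reducible"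
    using Cons.IH[of "pre @ [x]" y] Cons.prems by simp
  also have "\<dots> \<longleftrightarrow> fa_gen (pre @ [x + (?y - k)] @ (?y - (?y - k)) # replicate (length t) k) \<in> reducible"
    using fa_gen_reducible_iff_transfer[OF len, of x ?y "?y - k"] by simp
  finally show ?case by (simp add: algebra_simps)
qed simp

lemma fa_gen_transfer_power:
  assumes "length b + 2 = n"
  shows "fa_gen (x # y # b) - fa_smult ((q1 * q2) ^ j) (fa_gen ((x - int j) # (y + int j) # b))
    \<in> reducible"
proof (induction j)
  case 0
  then show ?case by (simp add: subalg_plus_ideal_zero)
next
  case (Suc j)
  have "fa_gen ((x - int j) # (y + int j) # b)
      - fa_smult (q1 * q2) (fa_gen ((x - int j - 1) # (y + int j + 1) # b)) \<in> reducible"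
    using fa_gen_transfer_one[of "[]" b "x - int j" "y + int j"] assms by simp
  from subalg_plus_ideal_add[OF Suc.IH subalg_plus_ideal_smult[OF this, of "(q1 * q2) ^ j"]]
  show ?case by (simp add: fa_smult_diff algebra_simps)
qed

lemma commutator_transfer_sum_reducible:
  assumes "m + 2 = n"
  shows "(\<Sum>t\<in>{1..int r}. fa_gen ((k + int r - t) # (k + t) # replicate m k)) \<in> reducible"
    (is "?X \<in> _")
proof -
  define d where "d = (k + int r) # replicate m k"
  have "rel_c k d i = 0" if "i \<in> {..<length d} - {0}" for i
    using that by (cases i) (simp_all add: d_def rel_c_def)
  then have "(\<Sum>i<length d. rel_c k d i) = rel_c k d 0"
    by (subst sum.remove[of _ 0]) (auto simp: d_def)
  also have "\<dots> = - ?X"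
    by (simp add: rel_c_def d_def)
  finally have "fa_smult (q2 - 1) (- ?X) =
      (fa_mult (fa_gen [k]) (fa_gen d) - fa_mult (fa_gen d) (fa_gen [k])) - rel2 k d"
    by (simp add: rel2_def fa_smult_def)
  also have "\<dots> \<in> reducible"
    using assms
    by (intro subalg_plus_ideal_diff subalg_plus_ideal_mult fa_gen_singleton_reducible
        shorter_gens_reducible rel2_reducible) (auto simp: d_def)
  finally have "- ?X \<in> reducible"
    using subalg_plus_ideal_smult_cancel q2_minus_1_neq_0 by blast
  then show ?thesis using subalg_plus_ideal_uminus by fastforce
qed

lemma fa_gen_constant_tail_reducible:
  assumes "m + 2 = n" "r \<ge> 1"
  shows "fa_gen ((k + int r) # k # replicate m k) \<in> reducible"
proof -
  define u where "u = fa_gen (k # (k + int r) # replicate m k)"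
  define X where "X = (\<Sum>t\<in>{1..int r}. fa_gen ((k + int r - t) # (k + t) # replicate m k))"
  define Y where "Y = (\<Sum>t\<in>{1..int r}. fa_smult ((q1 * q2) ^ nat (int r - t)) u)"
  have "X - Y = (\<Sum>t\<in>{1..int r}.
      fa_gen ((k + int r - t) # (k + t) # replicate m k) - fa_smult ((q1 * q2) ^ nat (int r - t)) u)"
    unfolding X_def Y_def by (simp add: sum_subtractf)
  also have "\<dots> \<in> reducible"
  proof (rule subalg_plus_ideal_sum)
    fix t assume "t \<in> {1..int r}"
    then show "fa_gen ((k + int r - t) # (k + t) # replicate m k)
        - fa_smult ((q1 * q2) ^ nat (int r - t)) u \<in> reducible"
      using fa_gen_transfer_power[of "replicate m k" "k + int r - t" "k + t" "nat (int r - t)"] assms(1)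
      by (simp add: u_def)
  qed
  finally have "Y \<in> reducible"
    using commutator_transfer_sum_reducible[OF assms(1), of k r] subalg_plus_ideal_diff
    unfolding X_def by fastforce
  moreover have "Y = fa_smult (\<Sum>t\<in>{1..int r}. (q1 * q2) ^ nat (int r - t)) u"
    unfolding Y_def by (simp only: fa_smult_sum_left)
  also have "(\<Sum>t\<in>{1..int r}. (q1 * q2) ^ nat (int r - t)) = (\<Sum>j<r. (q1 * q2) ^ j)"
    by (rule sum.reindex_bij_witness[of _ "\<lambda>j. int r - int j" "\<lambda>t. nat (int r - t)"]) auto
  ultimately have "u \<in> reducible"
    using subalg_plus_ideal_smult_cancel sum_powers_q1_times_q2_neq_0[OF assms(2)] by metis
  then show ?thesis
    using fa_gen_reducible_iff_transfer[of "[]" "replicate m k" k "k + int r" "int r"] assms(1)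
    by (simp add: u_def)
qed

end

lemma fa_gen_reducible: "d \<noteq> [] \<Longrightarrow> fa_gen d \<in> reducible"
proof (induction "length d" arbitrary: d rule: less_induct)
  case less
  then obtain x t where d: "d = x # t" by (cases d) auto
  show ?case
  proof (cases t)
    case Nil
    then show ?thesis using d fa_gen_singleton_reducible by simp
  next
    case (Cons y t')
    define n where "n = length d"
    define s where "s = x + sum_list t"
    define k where "k = (s - 1) div int n"
    define r where "r = nat ((s - 1) mod int n + 1)"
    have n: "n = length t' + 2" using d Cons by (simp add: n_def)
    have "(s - 1) mod int n \<ge> 0" using n by simp
    then have r: "r \<ge> 1" "int r = (s - 1) mod int n + 1" by (simp_all add: r_def)
    have shorter: "\<And>d'. d' \<noteq> [] \<Longrightarrow> length d' < n \<Longrightarrow> fa_gen d' \<in> reducible"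
      using less.hyps n_def by blast
    have "s - 1 = int n * k + (s - 1) mod int n" unfolding k_def by simp
    then have "s - int (length t) * k = k + int r" using r(2) by (simp add: n Cons algebra_simps)
    moreover have "fa_gen ((k + int r) # k # replicate (length t') k) \<in> reducible"
      using fa_gen_constant_tail_reducible[OF shorter _ r(1)] n by simp
    ultimately show ?thesis
      using fa_gen_reducible_iff_constant_tail[OF shorter, where pre="[]" and x=x and t=t and k=k] d Cons n
      by (simp add: s_def)
  qed
qed

lemma single_reducible: "\<forall>d\<in>set w. d \<noteq> [] \<Longrightarrow> Poly_Mapping.single w c \<in> reducible"
proof (induction w)
  case Nil
  then show ?case using subalg_plus_ideal_subalg[OF fa_subalg.scal[of c]] by (simp add: fa_scal_def)
next
  case (Cons d w)
  then have "fa_mult (fa_gen d) (Poly_Mapping.single w c) \<in> reducible"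
    by (intro subalg_plus_ideal_mult fa_gen_reducible) auto
  then show ?case by (simp add: fa_gen_def fa_mult_single)
qed

theorem proposition2p13:
  fixes p :: falg
  assumes "fa_admissible p"
  shows "\<exists>s\<in>fa_subalg {[m] | m. True}. p - s \<in> fa_ideal rels"
proof -
  have "(\<Sum>w\<in>Poly_Mapping.keys p. Poly_Mapping.single w (Poly_Mapping.lookup p w)) \<in> reducible"
    using assms unfolding fa_admissible_def by (intro subalg_plus_ideal_sum single_reducible) auto
  then show ?thesis unfolding sum_single_keys subalg_plus_ideal_def by blast
qed

end
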